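(* Let $f$ be analytic on $\mathbb{D}$ with $f(z)=z+\sum_{n=2}^{\infty}a_nz^n$ and $\operatorname{Re}f'(z)>0$ for all $z\in\mathbb{D}$, and let $\Gamma_1=-\frac12a_2$, $\Gamma_2=-\frac12\left(a_3-\frac32a_2^2\right)$. Then $$-\frac13\le|\Gamma_2|-|\Gamma_1|\le\frac13.$$ Both inequalities are sharp.
   Context: $\mathbb{D}=\{z\in\mathbb{C}:|z|<1\}$. The class of such $f$ is the class $\mathcal{R}$ of functions of bounded turning. $\Gamma_1,\Gamma_2$ are the first two logarithmic inverse coefficients: with $F=f^{-1}$ near $0$, $\log\frac{F(w)}{w}=2\sum_{n\ge1}\Gamma_nw^n$ near $0$. *)

theory Defs
  imports "HOL-Complex_Analysis.Complex_Analysis"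
begin

definition bounded_turning :: "(complex \<Rightarrow> complex) \<Rightarrow> bool" where
  "bounded_turning f \<longleftrightarrow>
     f holomorphic_on ball 0 1 \<and> f 0 = 0 \<and> deriv f 0 = 1 \<and>
     (\<forall>z\<in>ball 0 1. Re (deriv f z) > 0)"

definition taylor_coeff :: "(complex \<Rightarrow> complex) \<Rightarrow> nat \<Rightarrow> complex" where
  "taylor_coeff f n = (deriv ^^ n) f 0 / of_nat (fact n)"

definition Gamma1 :: "(complex \<Rightarrow> complex) \<Rightarrow> complex" where
  "Gamma1 f = - taylor_coeff f 2 / 2"

definition Gamma2 :: "(complex \<Rightarrow> complex) \<Rightarrow> complex" where
  "Gamma2 f = - (taylor_coeff f 3 - 3 / 2 * (taylor_coeff f 2)^2) / 2"

end

theory Submission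
  imports Defs
begin

(* Write f' = p. Then Re p > 0 and p 0 = 1, so the Cayley transform (p - 1) / (p + 1) maps the
   disc into itself fixing 0 and, by Schwarz's lemma, equals z h(z) with |h| <= 1. Differentiating
   p = (1 + z h) / (1 - z h) twice at 0 and applying the Schwarz-Pick inequality
   |h'(0)| <= 1 - |h(0)|^2 gives |3 a3 - 2 a2^2| <= 2 - 2 |a2|^2. Since
   Gamma2 = 5/12 a2^2 - (3 a3 - 2 a2^2) / 6 and |Gamma1| = |a2| / 2, both bounds follow from the
   triangle inequality and elementary estimates in r = |a2|, which lies in [0, 1].
   Equality holds for f' = t (1 + z) / (1 - z) + (1 - t) (1 - z) / (1 + z) with t = 1/2 and t = 5/6. *)

lemma Schwarz_Pick_deriv_0:
  assumes holh: "h holomorphic_on ball 0 1"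
    and lt1: "\<And>z. z \<in> ball 0 1 \<Longrightarrow> cmod (h z) < 1"
  shows "cmod (deriv h 0) \<le> 1 - (cmod (h 0))\<^sup>2"
proof -
  define b where "b = h 0"
  have b: "cmod b < 1"
    using lt1[of 0] by (simp add: b_def)
  have den: "1 - cnj b * h z \<noteq> 0" if "z \<in> ball 0 1" for z
    using lt1[OF that] b norm_mult_less[of "cnj b" 1 "h z" 1] by auto
  define k where "k = Moebius_function 0 b \<circ> h"
  have k: "k z = (h z - b) / (1 - cnj b * h z)" for z
    by (simp add: k_def Moebius_function_simple)
  have "k holomorphic_on ball 0 1"
    unfolding k_def using Moebius_function_holomorphic[OF b] lt1
    by (intro holomorphic_on_compose_gen[OF holh]) auto
  moreover have "k 0 = 0"
    by (simp add: k b_def)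
  moreover have "cmod (k z) < 1" if "cmod z < 1" for z
    using Moebius_function_norm_lt_1[OF b lt1] that by (simp add: k_def)
  ultimately have "cmod (deriv k 0) \<le> 1"
    by (intro Schwarz_Lemma(2)[where \<xi> = 0]) auto
  moreover have "(k has_field_derivative deriv h 0 / (1 - cnj b * b)) (at 0)"
  proof -
    have "(h has_field_derivative deriv h 0) (at 0)"
      using holomorphic_derivI[OF holh] by simp
    then show ?thesis
      unfolding k using den[of 0]
      by (auto intro!: derivative_eq_intros simp: b_def power2_eq_square)
  qed
  moreover have "1 - cnj b * b = of_real (1 - (cmod b)\<^sup>2)"
    using complex_norm_square[of b] by (simp add: mult.commute)
  moreover have pos: "0 < 1 - (cmod b)\<^sup>2"
    using b by (simp add: abs_square_less_1)
  ultimately have "cmod (deriv h 0) / (1 - (cmod b)\<^sup>2) \<le> 1"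
    by (metis DERIV_imp_deriv norm_divide norm_of_real abs_of_pos)
  then show ?thesis
    using pos by (simp add: b_def divide_le_eq)
qed

lemma Schwarz_Pick_deriv_0_le:
  assumes holh: "h holomorphic_on ball 0 1"
    and le1: "\<And>z. z \<in> ball 0 1 \<Longrightarrow> cmod (h z) \<le> 1"
  shows "cmod (deriv h 0) \<le> 1 - (cmod (h 0))\<^sup>2"
proof -
  have scaled: "t * cmod (deriv h 0) + t\<^sup>2 * (cmod (h 0))\<^sup>2 \<le> 1" if t: "t \<in> {0<..<1}" for t :: real
  proof -
    have "cmod (of_real t * h z) < 1" if "z \<in> ball 0 1" for z
    proof -
      have "cmod (of_real t * h z) = t * cmod (h z)"
        using t by (simp add: norm_mult)
      also have "\<dots> \<le> t"
        using le1[OF that] t by (intro mult_left_le) auto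
      finally show ?thesis
        using t by simp
    qed
    then have "cmod (deriv (\<lambda>z. of_real t * h z) 0) \<le> 1 - (cmod (of_real t * h 0))\<^sup>2"
      using holh by (intro Schwarz_Pick_deriv_0 holomorphic_intros)
    moreover have "deriv (\<lambda>z. of_real t * h z) 0 = of_real t * deriv h 0"
      using holh by (intro deriv_cmult) (auto intro: holomorphic_on_imp_differentiable_at)
    ultimately show ?thesis
      using t by (simp add: norm_mult power_mult_distrib)
  qed
  have "((\<lambda>t. t * cmod (deriv h 0) + t\<^sup>2 * (cmod (h 0))\<^sup>2) \<longlongrightarrow>
          1 * cmod (deriv h 0) + 1\<^sup>2 * (cmod (h 0))\<^sup>2) (at_left (1::real))"
    by (intro tendsto_intros)
  moreover have "eventually (\<lambda>t. t \<in> {0<..<1}) (at_left (1::real))"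
    by (rule eventually_at_left_real) simp
  then have "eventually (\<lambda>t. t * cmod (deriv h 0) + t\<^sup>2 * (cmod (h 0))\<^sup>2 \<le> 1) (at_left (1::real))"
    by eventually_elim (rule scaled)
  ultimately have "1 * cmod (deriv h 0) + 1\<^sup>2 * (cmod (h 0))\<^sup>2 \<le> 1"
    by (rule tendsto_upperbound) (simp add: trivial_limit_at_left_real)
  then show ?thesis
    by simp
qed

lemma norm_diff_1_less_norm_add_1_iff: "cmod (z - 1) < cmod (z + 1) \<longleftrightarrow> 0 < Re z"
  unfolding cmod_def by (simp add: power2_eq_square algebra_simps)

lemma Re_Cayley_pos:
  assumes "cmod w < 1"
  shows "0 < Re ((1 + w) / (1 - w))"
proof -
  have "1 - w \<noteq> 0"
    using assms by auto
  then have "cmod ((1 + w) / (1 - w) - 1) < cmod ((1 + w) / (1 - w) + 1)"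
    using assms by (simp add: field_simps norm_divide norm_mult divide_strict_right_mono)
  then show ?thesis
    by (simp add: norm_diff_1_less_norm_add_1_iff)
qed

lemma Re_pos_Schwarz_representation:
  assumes holp: "p holomorphic_on ball 0 1" and p0: "p 0 = 1"
    and re: "\<And>z. z \<in> ball 0 1 \<Longrightarrow> 0 < Re (p z)"
  obtains h where "h holomorphic_on ball 0 1" "\<And>z. z \<in> ball 0 1 \<Longrightarrow> cmod (h z) \<le> 1"
    "\<And>z. z \<in> ball 0 1 \<Longrightarrow> p z = (1 + z * h z) / (1 - z * h z)"
proof -
  have p_add_1: "p z + 1 \<noteq> 0" if "z \<in> ball 0 1" for z
  proof -
    have "0 < Re (p z + 1)"
      using re[OF that] by simp
    then show ?thesis
      by (metis less_irrefl zero_complex.sel(1))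
  qed
  define w where "w z = (p z - 1) / (p z + 1)" for z
  have holw: "w holomorphic_on ball 0 1"
    unfolding w_def using holp p_add_1 by (intro holomorphic_intros) auto
  have w0: "w 0 = 0"
    by (simp add: w_def p0)
  have w_lt_1: "cmod (w z) < 1" if "cmod z < 1" for z
    using re[of z] p_add_1[of z] that
    by (simp add: w_def norm_divide divide_less_eq norm_diff_1_less_norm_add_1_iff)
  obtain h where holh: "h holomorphic_on ball 0 1" and wh: "\<And>z. cmod z < 1 \<Longrightarrow> w z = z * h z"
    and dw: "deriv w 0 = h 0"
    using Schwarz3[OF holw w0] by blast
  show thesis
  proof
    show "h holomorphic_on ball 0 1"
      by (fact holh)
    show "cmod (h z) \<le> 1" if "z \<in> ball 0 1" for z
    proof (cases "z = 0")
      case True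
      then show ?thesis
        using Schwarz_Lemma(2)[OF holw w0 w_lt_1, of 0] dw by simp
    next
      case False
      have "cmod z * cmod (h z) \<le> cmod z * 1"
        using Schwarz_Lemma(1)[OF holw w0 w_lt_1, of z] wh[of z] that by (simp add: norm_mult)
      then show ?thesis
        using False by simp
    qed
    show "p z = (1 + z * h z) / (1 - z * h z)" if "z \<in> ball 0 1" for z
    proof -
      have "w z \<noteq> 1"
        using w_lt_1[of z] that by auto
      moreover have "1 + w z = 2 * p z / (p z + 1)" "1 - w z = 2 / (p z + 1)"
        using p_add_1[OF that] by (simp_all add: w_def field_simps)
      ultimately have "p z = (1 + w z) / (1 - w z)"
        using p_add_1[OF that] by simp
      then show ?thesis
        using wh[of z] that by simp
    qed
  qed
qed

lemma deriv_Cayley_Schwarz_0: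
  assumes holh: "h holomorphic_on ball 0 1"
    and le1: "\<And>z. z \<in> ball 0 1 \<Longrightarrow> cmod (h z) \<le> 1"
  defines "q \<equiv> \<lambda>z. (1 + z * h z) / (1 - z * h z)"
  shows "deriv q 0 = 2 * h 0" and "(deriv ^^ 2) q 0 = 4 * deriv h 0 + 4 * (h 0)\<^sup>2"
proof -
  have nz: "1 - z * h z \<noteq> 0" if "z \<in> ball 0 1" for z
  proof -
    have "cmod (z * h z) \<le> cmod z"
      using le1[OF that] by (simp add: norm_mult mult_left_le)
    also have "\<dots> < 1"
      using that by simp
    finally show ?thesis
      by auto
  qed
  have hd: "(h has_field_derivative deriv h z) (at z)" if "z \<in> ball 0 1" for z
    using holomorphic_derivI[OF holh _ that] by simp
  define D where "D z = 2 * (h z + z * deriv h z) / (1 - z * h z)\<^sup>2" for z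
  have qD: "(q has_field_derivative D z) (at z)" if "z \<in> ball 0 1" for z
    unfolding q_def D_def using nz[OF that]
    by (auto intro!: derivative_eq_intros hd[OF that] simp: field_simps power2_eq_square)
  have "eventually (\<lambda>z. z \<in> ball 0 1) (nhds 0)"
    by (intro eventually_nhds_in_open) auto
  then have "eventually (\<lambda>z. deriv q z = D z) (nhds 0)"
    by eventually_elim (rule DERIV_imp_deriv[OF qD])
  then have "deriv q 0 = D 0" and "(deriv ^^ 2) q 0 = deriv D 0"
    by (auto simp: numeral_2_eq_2 intro: deriv_cong_ev dest: eventually_nhds_x_imp_x)
  moreover have "(D has_field_derivative 4 * deriv h 0 + 4 * (h 0)\<^sup>2) (at 0)"
  proof -
    have "(deriv h has_field_derivative deriv (deriv h) 0) (at 0)"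
      using holomorphic_derivI[OF holomorphic_deriv[OF holh], of 0] by simp
    then show ?thesis
      unfolding D_def by (auto intro!: derivative_eq_intros hd simp: power2_eq_square)
  qed
  ultimately show "deriv q 0 = 2 * h 0" and "(deriv ^^ 2) q 0 = 4 * deriv h 0 + 4 * (h 0)\<^sup>2"
    by (simp_all add: D_def DERIV_imp_deriv)
qed

lemma Re_pos_second_deriv_0_bound:
  assumes holp: "p holomorphic_on ball 0 1" and p0: "p 0 = 1"
    and re: "\<And>z. z \<in> ball 0 1 \<Longrightarrow> 0 < Re (p z)"
  shows "cmod ((deriv ^^ 2) p 0 - (deriv p 0)\<^sup>2) \<le> 4 - (cmod (deriv p 0))\<^sup>2"
proof -
  obtain h where holh: "h holomorphic_on ball 0 1" and le1: "\<And>z. z \<in> ball 0 1 \<Longrightarrow> cmod (h z) \<le> 1"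
    and ph: "\<And>z. z \<in> ball 0 1 \<Longrightarrow> p z = (1 + z * h z) / (1 - z * h z)"
    using Re_pos_Schwarz_representation[OF assms] by blast
  have "eventually (\<lambda>z. z \<in> ball 0 1) (nhds 0)"
    by (intro eventually_nhds_in_open) auto
  then have "eventually (\<lambda>z. p z = (1 + z * h z) / (1 - z * h z)) (nhds 0)"
    by eventually_elim (rule ph)
  then have "deriv p 0 = 2 * h 0" and "(deriv ^^ 2) p 0 = 4 * deriv h 0 + 4 * (h 0)\<^sup>2"
    using deriv_Cayley_Schwarz_0[OF holh le1] higher_deriv_cong_ev[of p _ 0 0 1]
      higher_deriv_cong_ev[of p _ 0 0 2] by simp_all
  moreover have "cmod (deriv h 0) \<le> 1 - (cmod (h 0))\<^sup>2"
    using Schwarz_Pick_deriv_0_le[OF holh le1] .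
  ultimately show ?thesis
    by (simp add: norm_mult power_mult_distrib)
qed

lemma taylor_coeff_Suc: "taylor_coeff f (Suc n) = (deriv ^^ n) (deriv f) 0 / of_nat (fact (Suc n))"
  by (simp only: taylor_coeff_def funpow_Suc_right comp_apply)

lemma bounded_turning_coeff_bound:
  assumes "bounded_turning f"
  shows "cmod (3 * taylor_coeff f 3 - 2 * (taylor_coeff f 2)\<^sup>2) \<le> 2 - 2 * (cmod (taylor_coeff f 2))\<^sup>2"
proof -
  define a2 a3 where "a2 = taylor_coeff f 2" and "a3 = taylor_coeff f 3"
  have "deriv f holomorphic_on ball 0 1" "deriv f 0 = 1" "\<And>z. z \<in> ball 0 1 \<Longrightarrow> 0 < Re (deriv f z)"
    using assms holomorphic_deriv[of f "ball 0 1"] by (auto simp: bounded_turning_def)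
  then have "cmod ((deriv ^^ 2) (deriv f) 0 - (deriv (deriv f) 0)\<^sup>2) \<le> 4 - (cmod (deriv (deriv f) 0))\<^sup>2"
    by (rule Re_pos_second_deriv_0_bound)
  moreover have "deriv (deriv f) 0 = 2 * a2" "(deriv ^^ 2) (deriv f) 0 = 6 * a3"
    using taylor_coeff_Suc[of f 1] taylor_coeff_Suc[of f 2]
    by (simp_all add: a2_def a3_def numeral_3_eq_3 numeral_2_eq_2 mult.commute)
  ultimately have "cmod (6 * a3 - (2 * a2)\<^sup>2) \<le> 4 - (cmod (2 * a2))\<^sup>2"
    by simp
  moreover have "cmod (6 * a3 - (2 * a2)\<^sup>2) = 2 * cmod (3 * a3 - 2 * a2\<^sup>2)"
  proof -
    have "6 * a3 - (2 * a2)\<^sup>2 = 2 * (3 * a3 - 2 * a2\<^sup>2)"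
      by (simp add: algebra_simps power2_eq_square)
    then show ?thesis
      by (simp only: norm_mult norm_numeral)
  qed
  moreover have "(cmod (2 * a2))\<^sup>2 = 4 * (cmod a2)\<^sup>2"
    by (simp add: norm_mult power_mult_distrib)
  ultimately show ?thesis
    unfolding a2_def[symmetric] a3_def[symmetric] by linarith
qed

lemma bounded_turning_primitive:
  assumes holp: "p holomorphic_on ball 0 1" and p0: "p 0 = 1"
    and re: "\<And>z. z \<in> ball 0 1 \<Longrightarrow> 0 < Re (p z)"
  obtains f where "bounded_turning f"
    "\<And>n. taylor_coeff f (Suc n) = (deriv ^^ n) p 0 / of_nat (fact (Suc n))"
proof -
  obtain g where g: "\<And>z. z \<in> ball 0 1 \<Longrightarrow> (g has_field_derivative p z) (at z within ball 0 1)"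
    using holomorphic_convex_primitive'[OF convex_ball open_ball holp] by blast
  define f where "f z = g z - g 0" for z
  have f': "(f has_field_derivative p z) (at z)" if "z \<in> ball 0 1" for z
    using g[OF that] at_within_open[OF that open_ball] unfolding f_def
    by (auto intro!: derivative_eq_intros)
  have "f holomorphic_on ball 0 1"
    using f' field_differentiable_at_within field_differentiable_def holomorphic_on_def by blast
  then have "bounded_turning f"
    using DERIV_imp_deriv[OF f'] p0 re by (simp add: bounded_turning_def f_def)
  moreover have "eventually (\<lambda>z. z \<in> ball 0 1) (nhds 0)"
    by (intro eventually_nhds_in_open) auto
  then have deriv_f_eq: "eventually (\<lambda>z. deriv f z = p z) (nhds 0)"
    by eventually_elim (rule DERIV_imp_deriv[OF f'])
  have "taylor_coeff f (Suc n) = (deriv ^^ n) p 0 / of_nat (fact (Suc n))" for n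
    unfolding taylor_coeff_Suc using higher_deriv_cong_ev[OF deriv_f_eq refl] by simp
  ultimately show thesis
    using that by blast
qed

lemma logarithmic_inverse_coeff_bounds:
  fixes a2 a3 :: complex
  assumes coeff_bound: "cmod (3 * a3 - 2 * a2\<^sup>2) \<le> 2 - 2 * (cmod a2)\<^sup>2"
  shows "- 1/3 \<le> cmod (- (a3 - 3/2 * a2\<^sup>2) / 2) - cmod (- a2 / 2)"
    and "cmod (- (a3 - 3/2 * a2\<^sup>2) / 2) - cmod (- a2 / 2) \<le> 1/3"
proof -
  define r W where "r = cmod a2" and "W = 3 * a3 - 2 * a2\<^sup>2"
  have G2: "- (a3 - 3/2 * a2\<^sup>2) / 2 = 5/12 * a2\<^sup>2 - W / 6"
    by (simp add: W_def field_simps power2_eq_square)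
  have G1: "cmod (- a2 / 2) = r / 2"
    by (simp add: r_def norm_divide)
  have W: "cmod W \<le> 2 - 2 * r\<^sup>2"
    using coeff_bound by (simp add: W_def r_def)
  have "r\<^sup>2 \<le> 1"
    using W norm_ge_zero[of W] by linarith
  then have r: "0 \<le> r" "r \<le> 1"
    by (simp_all add: r_def abs_square_le_1)
  have norm_a2_sq: "cmod (5/12 * a2\<^sup>2) = 5/12 * r\<^sup>2"
    by (simp add: r_def norm_mult norm_power)
  have "cmod (5/12 * a2\<^sup>2 - W / 6) \<le> 5/12 * r\<^sup>2 + cmod W / 6"
    using norm_triangle_ineq4[of "5/12 * a2\<^sup>2" "W / 6"] norm_a2_sq by (simp add: norm_divide)
  moreover have "r\<^sup>2 \<le> r"
    using r by (simp add: power2_eq_square mult_left_le)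
  ultimately show "cmod (- (a3 - 3/2 * a2\<^sup>2) / 2) - cmod (- a2 / 2) \<le> 1/3"
    unfolding G1 G2 using W r by linarith
  have "5/12 * r\<^sup>2 - cmod W / 6 \<le> cmod (5/12 * a2\<^sup>2 - W / 6)"
    using norm_triangle_ineq2[of "5/12 * a2\<^sup>2" "W / 6"] norm_a2_sq by (simp add: norm_divide)
  then have lower: "5/12 * r\<^sup>2 - cmod W / 6 \<le> cmod (- (a3 - 3/2 * a2\<^sup>2) / 2)"
    unfolding G2 .
  show "- 1/3 \<le> cmod (- (a3 - 3/2 * a2\<^sup>2) / 2) - cmod (- a2 / 2)"
  proof (cases "r \<le> 2/3")
    case True
    then show ?thesis
      unfolding G1 using norm_ge_zero[of "- (a3 - 3/2 * a2\<^sup>2) / 2"] by linarith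
  next
    case False
    then have "2/3 * r \<le> r\<^sup>2"
      using mult_right_mono[of "2/3" r r] r by (simp add: power2_eq_square)
    then show ?thesis
      unfolding G1 using lower W by linarith
  qed
qed

lemma exists_bounded_turning_coeffs:
  fixes t :: real
  assumes t: "0 \<le> t" "t \<le> 1"
  shows "\<exists>f. bounded_turning f \<and> taylor_coeff f 2 = 2 * t - 1 \<and> taylor_coeff f 3 = 2/3"
proof -
  define p where "p z = of_real t * ((1 + z) / (1 - z)) + of_real (1 - t) * ((1 - z) / (1 + z))"
    for z :: complex
  have nz: "1 - z \<noteq> 0" "1 + z \<noteq> 0" if "z \<in> ball 0 1" for z :: complex
    using that by (auto simp: add_eq_0_iff)
  have "p holomorphic_on ball 0 1"
    unfolding p_def using nz by (intro holomorphic_intros) auto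
  moreover have "p 0 = 1"
    by (simp add: p_def flip: of_real_add)
  moreover have "0 < Re (p z)" if "z \<in> ball 0 1" for z
  proof -
    have Re_pos: "0 < Re ((1 + z) / (1 - z))" "0 < Re ((1 - z) / (1 + z))"
      using that Re_Cayley_pos[of z] Re_Cayley_pos[of "- z"] by simp_all
    have "Re (of_real r * w) = r * Re w" for r w
      by simp
    then have "Re (p z) = t * Re ((1 + z) / (1 - z)) + (1 - t) * Re ((1 - z) / (1 + z))"
      by (simp only: p_def plus_complex.sel)
    with Re_pos t show ?thesis
      by (cases "t = 0") (auto intro: add_pos_nonneg)
  qed
  moreover have "deriv p 0 = 4 * t - 2" "(deriv ^^ 2) p 0 = 4"
  proof -
    define D where "D z = of_real t * (2 / (1 - z)\<^sup>2) - of_real (1 - t) * (2 / (1 + z)\<^sup>2)"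
      for z :: complex
    have pD: "(p has_field_derivative D z) (at z)" if "z \<in> ball 0 1" for z
    proof -
      have "(1 - z) * (1 - z) \<noteq> 0" "(1 + z) * (1 + z) \<noteq> 0"
        using nz[OF that] by simp_all
      then show ?thesis
        unfolding p_def D_def using nz[OF that]
        by (auto intro!: derivative_eq_intros simp: field_simps power2_eq_square)
    qed
    have "eventually (\<lambda>z. z \<in> ball 0 1) (nhds 0)"
      by (intro eventually_nhds_in_open) auto
    then have "eventually (\<lambda>z. deriv p z = D z) (nhds 0)"
      by eventually_elim (rule DERIV_imp_deriv[OF pD])
    then have "deriv p 0 = D 0" "(deriv ^^ 2) p 0 = deriv D 0"
      by (auto simp: numeral_2_eq_2 intro: deriv_cong_ev dest: eventually_nhds_x_imp_x)
    moreover have "(D has_field_derivative 4) (at 0)"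
      unfolding D_def by (auto intro!: derivative_eq_intros simp: field_simps power2_eq_square)
    ultimately show "deriv p 0 = 4 * t - 2" "(deriv ^^ 2) p 0 = 4"
      by (simp_all add: D_def DERIV_imp_deriv algebra_simps)
  qed
  ultimately obtain f where "bounded_turning f"
    "\<And>n. taylor_coeff f (Suc n) = (deriv ^^ n) p 0 / of_nat (fact (Suc n))"
    using bounded_turning_primitive by metis
  then show ?thesis
    using \<open>deriv p 0 = 4 * t - 2\<close> \<open>(deriv ^^ 2) p 0 = 4\<close>
    by (auto simp: numeral_3_eq_3 numeral_2_eq_2)
qed

theorem mainTheorem10:
  shows "(\<forall>f. bounded_turning f \<longrightarrow>
            - 1/3 \<le> cmod (Gamma2 f) - cmod (Gamma1 f) \<and>
            cmod (Gamma2 f) - cmod (Gamma1 f) \<le> 1/3) \<and>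
         (\<exists>f. bounded_turning f \<and> cmod (Gamma2 f) - cmod (Gamma1 f) = - 1/3) \<and>
         (\<exists>f. bounded_turning f \<and> cmod (Gamma2 f) - cmod (Gamma1 f) = 1/3)"
proof (intro conjI allI impI)
  fix f
  assume "bounded_turning f"
  from logarithmic_inverse_coeff_bounds[OF bounded_turning_coeff_bound[OF this]]
  show "- 1/3 \<le> cmod (Gamma2 f) - cmod (Gamma1 f)" "cmod (Gamma2 f) - cmod (Gamma1 f) \<le> 1/3"
    by (simp_all add: Gamma1_def Gamma2_def)
next
  obtain f where f: "bounded_turning f" "taylor_coeff f 2 = 2/3" "taylor_coeff f 3 = 2/3"
    using exists_bounded_turning_coeffs[of "5/6"] by auto
  have "cmod (Gamma2 f) - cmod (Gamma1 f) = - 1/3"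
    unfolding Gamma1_def Gamma2_def f(2,3) by (simp add: norm_divide power2_eq_square)
  with f(1) show "\<exists>f. bounded_turning f \<and> cmod (Gamma2 f) - cmod (Gamma1 f) = - 1/3"
    by blast
next
  obtain f where f: "bounded_turning f" "taylor_coeff f 2 = 0" "taylor_coeff f 3 = 2/3"
    using exists_bounded_turning_coeffs[of "1/2"] by auto
  have "cmod (Gamma2 f) - cmod (Gamma1 f) = 1/3"
    unfolding Gamma1_def Gamma2_def f(2,3) by (simp add: norm_divide)
  with f(1) show "\<exists>f. bounded_turning f \<and> cmod (Gamma2 f) - cmod (Gamma1 f) = 1/3"
    by blast
qed

end
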